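(* Let $\mathcal G=(G,\pi_G,c_G)\in\mathrm{LiftPMod}(\mathbb B,\mathcal C)$ with $G=(V_G,E_G)$ and $w_G\in\mathrm{Param}(\mathcal G)$; let $\mathcal H=(H,\pi_H,c_H)\in\mathrm{LiftPMod}(\mathbb B,\mathcal C)$ and $w_H\in\mathrm{Param}(\mathcal H)$; let $\mathcal X\subseteq\prod_{u\in\mathcal C}\mathcal Y_{p_{\mathcal C}(u)}$. Let $\eta\in\mathbb R_+$ and suppose $\varphi:\mathcal G\to\mathcal H$ is a morphism of lifted perceptrons such that $\|(w_G)_e-(w_H)_{\varphi(e)}\|\le\eta$ for all $e\in E_G$. Then for every $v\in V_G$, $\sup_{x\in\mathcal X}\|[\mathcal F_{\mathcal G}(w_G,x)]_v-[\mathcal F_{\mathcal H}(w_H,x)]_{\varphi(v)}\|\le L[\mathcal H,w_H](\eta,\mathcal X)$.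
   Context: Graphs: $G=(V,E)$, $V$ finite, $E\subseteq V\times V$; $G(-,v)=\{u:(u,v)\in E\}$. A homomorphism maps vertices preserving edges, acting on edges by $\varphi(u,v)=(\varphi(u),\varphi(v))$. A fibration is a homomorphism restricting to bijections $G(-,v)\to H(-,\varphi(v))$ for all $v$. A perceptron module over a finite DAG $B=(V_B,E_B)$ is $\mathbb B=((I_B,T_B),(\mathcal Y,\mathcal Z,\mathcal W),(M,\sigma))$: $I_B\subseteq V_B$ (vertices without parents), $T_B\subseteq V_B$, families of finite-dimensional real inner product spaces $\mathcal Y_v$ ($v\in V_B$), $\mathcal Z_e,\mathcal W_e$ ($e\in E_B$), maps $M_{(u,v)}:\mathcal W_{(u,v)}\times\mathcal Y_u\to\mathcal Z_{(u,v)}$ and $\sigma_v:\prod_{u\in B(-,v)}\mathcal Z_{(u,v)}\to\mathcal Y_v$ ($v\notin I_B$). Fix such $\mathbb B$, a finite set $\mathcal C$, $p_{\mathcal C}:\mathcal C\to I_B$. $\mathrm{LiftPMod}(\mathbb B,\mathcal C)$: triples $(G,\pi,c)$, $\pi:G\to B$ homomorphism, $c:\pi^{-1}(I_B)\to\mathcal C$ injective with $p_{\mathcal C}\circ c=\pi$ there. $\mathrm{Param}(\mathcal G)=\prod_{e\in E_G}\mathcal W_{\pi(e)}$. Forward function $\mathcal F_{\mathcal G}(w,x)=f$: $f_v=x_{c(v)}$ if $\pi(v)\in I_B$, else $f_v=F_v(w,f)$ where $F_v(w,g)=\sigma_{\pi(v)}((\sum_{u\in G(-,v)\cap\pi^{-1}(a)}M_{\pi(u,v)}(w_{(u,v)},g_u))_{a\in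 B(-,\pi(v))})$ (depends only on $w_{(u,v)},g_u$ for $u\in G(-,v)$). A morphism of lifted perceptrons $\varphi:(G,\pi_G,c_G)\to(H,\pi_H,c_H)$ is a fibration with $\pi_G=\pi_H\circ\varphi$ and $c_G=c_H\circ\varphi$. Quantitative continuity constant: for $\mathcal H=(H,\pi_H,c_H)$, $w^0\in\mathrm{Param}(\mathcal H)$, $\eta\ge0$, $x\in\mathcal X$, let $g^0=\mathcal F_{\mathcal H}(w^0,x)$; set $[L(\eta,x)]_v=0$ if $\pi_H(v)\in I_B$, and inductively otherwise $[L(\eta,x)]_v=\sup\|F_v(w,g)-F_v(w^0,g^0)\|$ over all $(w_{(u,v)},g_u)_{u\in H(-,v)}$ with $\|w_{(u,v)}-w^0_{(u,v)}\|\le\eta$ and $\|g_u-g^0_u\|\le[L(\eta,x)]_u$ ($F_v$ computed in $\mathcal H$). Then $L[\mathcal H,w^0](\eta,\mathcal X)=\sup_{x\in\mathcal X}\max_{v\in V_H}[L(\eta,x)]_v\in[0,+\infty]$. *)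

theory Defs
  imports "HOL-Analysis.Analysis"
begin

definition is_graph :: "'a set \<Rightarrow> ('a \<times> 'a) set \<Rightarrow> bool" where
  "is_graph V E \<longleftrightarrow> finite V \<and> E \<subseteq> V \<times> V"

definition in_nbrs :: "('a \<times> 'a) set \<Rightarrow> 'a \<Rightarrow> 'a set" where
  "in_nbrs E v = {u. (u, v) \<in> E}"

definition graph_hom :: "'a set \<Rightarrow> ('a \<times> 'a) set \<Rightarrow> 'b set \<Rightarrow> ('b \<times> 'b) set \<Rightarrow> ('a \<Rightarrow> 'b) \<Rightarrow> bool" where
  "graph_hom VG EG VH EH \<phi> \<longleftrightarrow> \<phi> ` VG \<subseteq> VH \<and> (\<forall>(u, v) \<in> EG. (\<phi> u, \<phi> v) \<in> EH)"

definition fibration :: "'a set \<Rightarrow> ('a \<times> 'a) set \<Rightarrow> 'b set \<Rightarrow> ('b \<times> 'b) set \<Rightarrow> ('a \<Rightarrow> 'b) \<Rightarrow> bool" where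
  "fibration VG EG VH EH \<phi> \<longleftrightarrow> graph_hom VG EG VH EH \<phi> \<and>
     (\<forall>v \<in> VG. bij_betw \<phi> (in_nbrs EG v) (in_nbrs EH (\<phi> v)))"

text \<open>The inner product spaces
  Y_v, Z_e, W_e are modelled as linear subspaces of ambient Euclidean spaces
  (every finite-dimensional real inner product space is isometric to such a subspace).
  The argument of sigma_v is a family indexed by the parents of v; entries outside
  the parents are ignored (we always pass 0 there).\<close>

definition perceptron_module ::
  "'b set \<Rightarrow> ('b \<times> 'b) set \<Rightarrow> 'b set \<Rightarrow> 'b set \<Rightarrow>
   ('b \<Rightarrow> 'y::euclidean_space set) \<Rightarrow> ('b \<times> 'b \<Rightarrow> 'z::euclidean_space set) \<Rightarrow>
   ('b \<times> 'b \<Rightarrow> 'w::euclidean_space set) \<Rightarrow>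
   ('b \<times> 'b \<Rightarrow> 'w \<Rightarrow> 'y \<Rightarrow> 'z) \<Rightarrow> ('b \<Rightarrow> ('b \<Rightarrow> 'z) \<Rightarrow> 'y) \<Rightarrow> bool" where
  "perceptron_module VB EB IB TB Y Z W M \<sigma> \<longleftrightarrow>
     is_graph VB EB \<and> acyclic EB \<and>
     IB \<subseteq> VB \<and> (\<forall>v \<in> IB. in_nbrs EB v = {}) \<and> TB \<subseteq> VB \<and>
     (\<forall>v \<in> VB. subspace (Y v)) \<and> (\<forall>e \<in> EB. subspace (Z e) \<and> subspace (W e)) \<and>
     (\<forall>(u, v) \<in> EB. \<forall>w \<in> W (u, v). \<forall>y \<in> Y u. M (u, v) w y \<in> Z (u, v)) \<and>
     (\<forall>v \<in> VB - IB. \<forall>z. (\<forall>a \<in> in_nbrs EB v. z a \<in> Z (a, v)) \<longrightarrow> \<sigma> v z \<in> Y v)"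

definition lifted_perceptron ::
  "'b set \<Rightarrow> ('b \<times> 'b) set \<Rightarrow> 'b set \<Rightarrow> 'c set \<Rightarrow> ('c \<Rightarrow> 'b) \<Rightarrow>
   'g set \<Rightarrow> ('g \<times> 'g) set \<Rightarrow> ('g \<Rightarrow> 'b) \<Rightarrow> ('g \<Rightarrow> 'c) \<Rightarrow> bool" where
  "lifted_perceptron VB EB IB C pC VG EG \<pi> c \<longleftrightarrow>
     is_graph VG EG \<and> graph_hom VG EG VB EB \<pi> \<and>
     inj_on c {v \<in> VG. \<pi> v \<in> IB} \<and>
     (\<forall>v \<in> VG. \<pi> v \<in> IB \<longrightarrow> c v \<in> C \<and> pC (c v) = \<pi> v)"

definition is_param ::
  "('b \<times> 'b \<Rightarrow> 'w set) \<Rightarrow> ('g \<times> 'g) set \<Rightarrow> ('g \<Rightarrow> 'b) \<Rightarrow> ('g \<times> 'g \<Rightarrow> 'w) \<Rightarrow> bool" where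
  "is_param W EG \<pi> w \<longleftrightarrow> (\<forall>(u, v) \<in> EG. w (u, v) \<in> W (\<pi> u, \<pi> v))"

definition Floc ::
  "('b \<times> 'b) set \<Rightarrow> ('g \<times> 'g) set \<Rightarrow> ('g \<Rightarrow> 'b) \<Rightarrow>
   ('b \<times> 'b \<Rightarrow> 'w \<Rightarrow> 'y \<Rightarrow> 'z::real_vector) \<Rightarrow> ('b \<Rightarrow> ('b \<Rightarrow> 'z) \<Rightarrow> 'y) \<Rightarrow>
   ('g \<times> 'g \<Rightarrow> 'w) \<Rightarrow> ('g \<Rightarrow> 'y) \<Rightarrow> 'g \<Rightarrow> 'y" where
  "Floc EB EG \<pi> M \<sigma> w g v =
     \<sigma> (\<pi> v) (\<lambda>a. if a \<in> in_nbrs EB (\<pi> v)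
                   then (\<Sum>u \<in> {u \<in> in_nbrs EG v. \<pi> u = a}. M (\<pi> u, \<pi> v) (w (u, v)) (g u))
                   else 0)"

text \<open>Forward function: the (unique, since G maps to a DAG) family f indexed by V_G
  satisfying the defining inductive equations.\<close>

definition forward ::
  "'b set \<Rightarrow> ('b \<times> 'b) set \<Rightarrow> 'g set \<Rightarrow> ('g \<times> 'g) set \<Rightarrow> ('g \<Rightarrow> 'b) \<Rightarrow> ('g \<Rightarrow> 'c) \<Rightarrow>
   ('b \<times> 'b \<Rightarrow> 'w \<Rightarrow> 'y \<Rightarrow> 'z::real_vector) \<Rightarrow> ('b \<Rightarrow> ('b \<Rightarrow> 'z) \<Rightarrow> 'y) \<Rightarrow>
   ('g \<times> 'g \<Rightarrow> 'w) \<Rightarrow> ('c \<Rightarrow> 'y) \<Rightarrow> 'g \<Rightarrow> 'y" where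
  "forward IB EB VG EG \<pi> c M \<sigma> w x =
     (THE f. f \<in> extensional VG \<and>
        (\<forall>v \<in> VG. f v = (if \<pi> v \<in> IB then x (c v) else Floc EB EG \<pi> M \<sigma> w f v)))"

definition Lvals ::
  "'b set \<Rightarrow> ('b \<times> 'b) set \<Rightarrow> ('b \<Rightarrow> 'y::real_normed_vector set) \<Rightarrow> ('b \<times> 'b \<Rightarrow> 'w::real_normed_vector set) \<Rightarrow>
   'h set \<Rightarrow> ('h \<times> 'h) set \<Rightarrow> ('h \<Rightarrow> 'b) \<Rightarrow> ('h \<Rightarrow> 'c) \<Rightarrow>
   ('b \<times> 'b \<Rightarrow> 'w \<Rightarrow> 'y \<Rightarrow> 'z::real_vector) \<Rightarrow> ('b \<Rightarrow> ('b \<Rightarrow> 'z) \<Rightarrow> 'y) \<Rightarrow>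
   ('h \<times> 'h \<Rightarrow> 'w) \<Rightarrow> real \<Rightarrow> ('c \<Rightarrow> 'y) \<Rightarrow> 'h \<Rightarrow> ennreal" where
  "Lvals IB EB Y W VH EH \<pi> c M \<sigma> w0 \<eta> x =
     (let g0 = forward IB EB VH EH \<pi> c M \<sigma> w0 x in
      THE l. l \<in> extensional VH \<and>
        (\<forall>v \<in> VH. l v =
          (if \<pi> v \<in> IB then 0
           else Sup {ennreal (norm (Floc EB EH \<pi> M \<sigma> w g v - Floc EB EH \<pi> M \<sigma> w0 g0 v)) | w g.
                       \<forall>u \<in> in_nbrs EH v.
                          w (u, v) \<in> W (\<pi> u, \<pi> v) \<and> norm (w (u, v) - w0 (u, v)) \<le> \<eta> \<and>
                          g u \<in> Y (\<pi> u) \<and> ennreal (norm (g u - g0 u)) \<le> l u})))"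

definition Lconst ::
  "'b set \<Rightarrow> ('b \<times> 'b) set \<Rightarrow> ('b \<Rightarrow> 'y::real_normed_vector set) \<Rightarrow> ('b \<times> 'b \<Rightarrow> 'w::real_normed_vector set) \<Rightarrow>
   'h set \<Rightarrow> ('h \<times> 'h) set \<Rightarrow> ('h \<Rightarrow> 'b) \<Rightarrow> ('h \<Rightarrow> 'c) \<Rightarrow>
   ('b \<times> 'b \<Rightarrow> 'w \<Rightarrow> 'y \<Rightarrow> 'z::real_vector) \<Rightarrow> ('b \<Rightarrow> ('b \<Rightarrow> 'z) \<Rightarrow> 'y) \<Rightarrow>
   ('h \<times> 'h \<Rightarrow> 'w) \<Rightarrow> real \<Rightarrow> ('c \<Rightarrow> 'y) set \<Rightarrow> ennreal" where
  "Lconst IB EB Y W VH EH \<pi> c M \<sigma> w0 \<eta> X =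
     (SUP x \<in> X. SUP v \<in> VH. Lvals IB EB Y W VH EH \<pi> c M \<sigma> w0 \<eta> x v)"

end

(*
  Induction along G, which is well-founded because it maps homomorphically into the finite
  DAG B. At an input vertex both forward passes read the same coordinate of x. At a hidden
  vertex v the fibration identifies the parents of v with those of phi v, so F_v evaluated in G
  with the weights w_G equals F_(phi v) evaluated in H with the weights and activations of G
  transported along phi. By the induction hypothesis and the closeness of the weights, this
  transported pair lies in the set whose supremum defines [L(eta, x)]_(phi v).
*)
theory Submission
  imports Defs
begin

lemma wf_ex1_extensional_fixpoint:
  assumes wf: "wf E"
    and local_dep: "\<And>f f' v. v \<in> V \<Longrightarrow> (\<forall>u. (u, v) \<in> E \<longrightarrow> f u = f' u) \<Longrightarrow> F f v = F f' v"
  shows "\<exists>!f. f \<in> extensional V \<and> (\<forall>v\<in>V. f v = F f v)"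
proof (rule ex_ex1I)
  define F' where "F' f v = (if v \<in> V then F f v else undefined)" for f v
  have "adm_wf E F'"
    unfolding adm_wf_def F'_def using local_dep by simp
  then have "wfrec E F' = F' (wfrec E F')"
    by (rule wfrec_fixpoint[OF wf])
  then have "wfrec E F' v = (if v \<in> V then F (wfrec E F') v else undefined)" for v
    unfolding F'_def by (rule fun_cong)
  then have "wfrec E F' \<in> extensional V \<and> (\<forall>v\<in>V. wfrec E F' v = F (wfrec E F') v)"
    by (simp add: extensional_def)
  then show "\<exists>f. f \<in> extensional V \<and> (\<forall>v\<in>V. f v = F f v)" by blast
next
  fix f g
  assume f: "f \<in> extensional V \<and> (\<forall>v\<in>V. f v = F f v)"
    and g: "g \<in> extensional V \<and> (\<forall>v\<in>V. g v = F g v)"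
  have "f v = g v" for v
    using wf
  proof (induction v rule: wf_induct_rule)
    case (less v)
    show ?case
    proof (cases "v \<in> V")
      case True
      then have "F f v = F g v"
        using local_dep less by blast
      then show ?thesis
        using f g True by metis
    next
      case False
      then show ?thesis
        using f g by (metis extensional_arb)
    qed
  qed
  then show "f = g" ..
qed

lemma lifted_perceptron_wf:
  assumes "perceptron_module VB EB IB TB Y Z W M \<sigma>"
    and "lifted_perceptron VB EB IB C pC VG EG \<pi> c"
  shows "wf EG"
proof -
  have "finite EB" "acyclic EB"
    using assms(1) unfolding perceptron_module_def is_graph_def
    by (auto intro: finite_subset)
  then have "wf EB"
    by (rule finite_acyclic_wf)
  moreover have "EG \<subseteq> inv_image EB \<pi>"
    using assms(2) by (auto simp: lifted_perceptron_def graph_hom_def)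
  ultimately show ?thesis
    by (blast intro: wf_subset)
qed

lemma Floc_cong:
  assumes "\<And>u. u \<in> in_nbrs EG v \<Longrightarrow> w (u, v) = w' (u, v) \<and> g u = g' u"
  shows "Floc EB EG \<pi> M \<sigma> w g v = Floc EB EG \<pi> M \<sigma> w' g' v"
  unfolding Floc_def using assms by (auto intro!: arg_cong[where f="\<sigma> (\<pi> v)"] sum.cong)

lemma forward_unfold:
  assumes "perceptron_module VB EB IB TB Y Z W M \<sigma>"
    and "lifted_perceptron VB EB IB C pC VG EG \<pi> c"
    and "v \<in> VG"
  shows "forward IB EB VG EG \<pi> c M \<sigma> w x v =
    (if \<pi> v \<in> IB then x (c v) else Floc EB EG \<pi> M \<sigma> w (forward IB EB VG EG \<pi> c M \<sigma> w x) v)"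
proof -
  let ?F = "\<lambda>f v. if \<pi> v \<in> IB then x (c v) else Floc EB EG \<pi> M \<sigma> w f v"
  have "\<exists>!f. f \<in> extensional VG \<and> (\<forall>v\<in>VG. f v = ?F f v)"
    using lifted_perceptron_wf[OF assms(1,2)]
    by (rule wf_ex1_extensional_fixpoint) (auto intro!: Floc_cong simp: in_nbrs_def)
  then have "\<forall>v\<in>VG. forward IB EB VG EG \<pi> c M \<sigma> w x v = ?F (forward IB EB VG EG \<pi> c M \<sigma> w x) v"
    unfolding forward_def by (rule theI'[THEN conjunct2])
  then show ?thesis
    using assms(3) by blast
qed

lemma Lvals_upper:
  assumes "perceptron_module VB EB IB TB Y Z W M \<sigma>"
    and "lifted_perceptron VB EB IB C pC VH EH \<pi> c"
    and "v \<in> VH" "\<pi> v \<notin> IB"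
    and "\<forall>u \<in> in_nbrs EH v. w (u, v) \<in> W (\<pi> u, \<pi> v) \<and> norm (w (u, v) - w0 (u, v)) \<le> \<eta> \<and>
           g u \<in> Y (\<pi> u) \<and>
           ennreal (norm (g u - forward IB EB VH EH \<pi> c M \<sigma> w0 x u))
             \<le> Lvals IB EB Y W VH EH \<pi> c M \<sigma> w0 \<eta> x u"
  shows "ennreal (norm (Floc EB EH \<pi> M \<sigma> w g v
            - Floc EB EH \<pi> M \<sigma> w0 (forward IB EB VH EH \<pi> c M \<sigma> w0 x) v))
           \<le> Lvals IB EB Y W VH EH \<pi> c M \<sigma> w0 \<eta> x v"
proof -
  let ?g0 = "forward IB EB VH EH \<pi> c M \<sigma> w0 x"
  let ?F = "\<lambda>l v. if \<pi> v \<in> IB then 0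
    else Sup {ennreal (norm (Floc EB EH \<pi> M \<sigma> w g v - Floc EB EH \<pi> M \<sigma> w0 ?g0 v)) | w g.
           \<forall>u \<in> in_nbrs EH v. w (u, v) \<in> W (\<pi> u, \<pi> v) \<and> norm (w (u, v) - w0 (u, v)) \<le> \<eta> \<and>
             g u \<in> Y (\<pi> u) \<and> ennreal (norm (g u - ?g0 u)) \<le> l u}"
  have "\<exists>!l. l \<in> extensional VH \<and> (\<forall>v\<in>VH. l v = ?F l v)"
    using lifted_perceptron_wf[OF assms(1,2)]
    by (rule wf_ex1_extensional_fixpoint) (simp add: in_nbrs_def)
  then have "\<forall>v\<in>VH. Lvals IB EB Y W VH EH \<pi> c M \<sigma> w0 \<eta> x v = ?F (Lvals IB EB Y W VH EH \<pi> c M \<sigma> w0 \<eta> x) v"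
    unfolding Lvals_def Let_def by (rule theI'[THEN conjunct2])
  then show ?thesis
    using assms(3-5) by (auto intro!: Sup_upper)
qed

lemma Floc_in_Y:
  assumes B: "perceptron_module VB EB IB TB Y Z W M \<sigma>"
    and hom: "graph_hom VG EG VB EB \<pi>"
    and w: "is_param W EG \<pi> w"
    and v: "v \<in> VG" "\<pi> v \<notin> IB"
    and g: "\<And>u. u \<in> in_nbrs EG v \<Longrightarrow> g u \<in> Y (\<pi> u)"
  shows "Floc EB EG \<pi> M \<sigma> w g v \<in> Y (\<pi> v)"
proof -
  have message_in_Z:
    "(\<Sum>u \<in> {u \<in> in_nbrs EG v. \<pi> u = a}. M (\<pi> u, \<pi> v) (w (u, v)) (g u)) \<in> Z (a, \<pi> v)"
    if a: "a \<in> in_nbrs EB (\<pi> v)" for a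
  proof (rule subspace_sum)
    show "subspace (Z (a, \<pi> v))"
      using B a by (auto simp: perceptron_module_def in_nbrs_def)
    fix u
    assume "u \<in> {u \<in> in_nbrs EG v. \<pi> u = a}"
    then have "(\<pi> u, \<pi> v) \<in> EB" "w (u, v) \<in> W (\<pi> u, \<pi> v)" "g u \<in> Y (\<pi> u)" "\<pi> u = a"
      using a w g by (auto simp: is_param_def in_nbrs_def)
    then show "M (\<pi> u, \<pi> v) (w (u, v)) (g u) \<in> Z (a, \<pi> v)"
      using B unfolding perceptron_module_def by fast
  qed
  have "\<pi> v \<in> VB - IB"
    using hom v by (auto simp: graph_hom_def)
  then show ?thesis
    using B message_in_Z unfolding Floc_def perceptron_module_def by auto
qed

text \<open>The supremum defining \<^const>\<open>Lvals\<close> only ranges over activations in \<open>Y\<close>.\<close>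

lemma forward_in_Y:
  assumes B: "perceptron_module VB EB IB TB Y Z W M \<sigma>"
    and G: "lifted_perceptron VB EB IB C pC VG EG \<pi> c"
    and w: "is_param W EG \<pi> w"
    and x: "x \<in> Pi C (\<lambda>u. Y (pC u))"
  shows "v \<in> VG \<Longrightarrow> forward IB EB VG EG \<pi> c M \<sigma> w x v \<in> Y (\<pi> v)"
  using lifted_perceptron_wf[OF B G]
proof (induction v rule: wf_induct_rule)
  case (less v)
  show ?case
  proof (cases "\<pi> v \<in> IB")
    case True
    then have "c v \<in> C" "pC (c v) = \<pi> v"
      using G less.prems by (auto simp: lifted_perceptron_def)
    then show ?thesis
      using True x less.prems forward_unfold[OF B G] by (metis Pi_mem)
  next
    case False
    have hom: "graph_hom VG EG VB EB \<pi>" and "EG \<subseteq> VG \<times> VG"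
      using G by (auto simp: lifted_perceptron_def is_graph_def)
    then have "forward IB EB VG EG \<pi> c M \<sigma> w x u \<in> Y (\<pi> u)" if "u \<in> in_nbrs EG v" for u
      using less.IH that by (auto simp: in_nbrs_def)
    then have "Floc EB EG \<pi> M \<sigma> w (forward IB EB VG EG \<pi> c M \<sigma> w x) v \<in> Y (\<pi> v)"
      by (rule Floc_in_Y[OF B hom w less.prems False])
    then show ?thesis
      using forward_unfold[OF B G less.prems] False by simp
  qed
qed

lemma Floc_transfer:
  assumes bij: "bij_betw \<phi> (in_nbrs EG v) (in_nbrs EH (\<phi> v))"
    and lab: "\<And>u. u \<in> in_nbrs EG v \<Longrightarrow> \<pi>H (\<phi> u) = \<pi>G u" "\<pi>H (\<phi> v) = \<pi>G v"
    and agree: "\<And>u. u \<in> in_nbrs EG v \<Longrightarrow> w' (\<phi> u, \<phi> v) = w (u, v) \<and> g' (\<phi> u) = g u"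
  shows "Floc EB EH \<pi>H M \<sigma> w' g' (\<phi> v) = Floc EB EG \<pi>G M \<sigma> w g v"
proof -
  have sums: "(\<Sum>u' \<in> {u' \<in> in_nbrs EH (\<phi> v). \<pi>H u' = a}. M (\<pi>H u', \<pi>G v) (w' (u', \<phi> v)) (g' u')) =
        (\<Sum>u \<in> {u \<in> in_nbrs EG v. \<pi>G u = a}. M (\<pi>G u, \<pi>G v) (w (u, v)) (g u))" for a
  proof (rule sum.reindex_cong)
    show "inj_on \<phi> {u \<in> in_nbrs EG v. \<pi>G u = a}"
      using bij by (auto simp: bij_betw_def intro: inj_on_subset)
    show "{u' \<in> in_nbrs EH (\<phi> v). \<pi>H u' = a} = \<phi> ` {u \<in> in_nbrs EG v. \<pi>G u = a}"
      using bij lab(1) unfolding bij_betw_def by force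
  qed (simp add: agree lab(1))
  show ?thesis
    unfolding Floc_def lab(2) sums ..
qed

lemma forward_fibration_unfold:
  assumes B: "perceptron_module VB EB IB TB Y Z W M \<sigma>"
    and G: "lifted_perceptron VB EB IB C pC VG EG \<pi>G cG"
    and fib: "fibration VG EG VH EH \<phi>"
    and lab: "\<forall>v \<in> VG. \<pi>G v = \<pi>H (\<phi> v)"
    and v: "v \<in> VG" "\<pi>G v \<notin> IB"
  defines "\<psi> \<equiv> inv_into (in_nbrs EG v) \<phi>"
  shows "forward IB EB VG EG \<pi>G cG M \<sigma> wG x v =
    Floc EB EH \<pi>H M \<sigma> (\<lambda>(u', _). wG (\<psi> u', v)) (forward IB EB VG EG \<pi>G cG M \<sigma> wG x \<circ> \<psi>) (\<phi> v)"
proof -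
  have bij: "bij_betw \<phi> (in_nbrs EG v) (in_nbrs EH (\<phi> v))"
    using fib v by (simp add: fibration_def)
  have "u \<in> VG" if "u \<in> in_nbrs EG v" for u
    using G that by (auto simp: in_nbrs_def lifted_perceptron_def is_graph_def)
  then have "Floc EB EH \<pi>H M \<sigma> (\<lambda>(u', _). wG (\<psi> u', v)) (forward IB EB VG EG \<pi>G cG M \<sigma> wG x \<circ> \<psi>) (\<phi> v)
      = Floc EB EG \<pi>G M \<sigma> wG (forward IB EB VG EG \<pi>G cG M \<sigma> wG x) v"
    using lab v bij_betw_inv_into_left[OF bij]
    by (intro Floc_transfer[OF bij]) (auto simp: \<psi>_def)
  then show ?thesis
    using forward_unfold[OF B G v(1)] v(2) by simp
qed

lemma forward_fibration_dist_le_Lvals: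
  assumes B: "perceptron_module VB EB IB TB Y Z W M \<sigma>"
    and G: "lifted_perceptron VB EB IB C pC VG EG \<pi>G cG" "is_param W EG \<pi>G wG"
    and H: "lifted_perceptron VB EB IB C pC VH EH \<pi>H cH"
    and x: "x \<in> Pi C (\<lambda>u. Y (pC u))"
    and fib: "fibration VG EG VH EH \<phi>"
    and lab: "\<forall>v \<in> VG. \<pi>G v = \<pi>H (\<phi> v)"
    and inputs: "\<forall>v \<in> VG. \<pi>G v \<in> IB \<longrightarrow> cG v = cH (\<phi> v)"
    and close: "\<forall>(u, v) \<in> EG. norm (wG (u, v) - wH (\<phi> u, \<phi> v)) \<le> \<eta>"
  shows "v \<in> VG \<Longrightarrow>
    ennreal (norm (forward IB EB VG EG \<pi>G cG M \<sigma> wG x v - forward IB EB VH EH \<pi>H cH M \<sigma> wH x (\<phi> v)))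
      \<le> Lvals IB EB Y W VH EH \<pi>H cH M \<sigma> wH \<eta> x (\<phi> v)"
  using lifted_perceptron_wf[OF B G(1)]
proof (induction v rule: wf_induct_rule)
  case (less v)
  let ?fG = "forward IB EB VG EG \<pi>G cG M \<sigma> wG x"
  let ?fH = "forward IB EB VH EH \<pi>H cH M \<sigma> wH x"
  have v: "\<phi> v \<in> VH" "\<pi>H (\<phi> v) = \<pi>G v"
    using fib lab less.prems by (auto simp: fibration_def graph_hom_def)
  show ?case
  proof (cases "\<pi>G v \<in> IB")
    case True
    then have "?fG v = ?fH (\<phi> v)"
      using forward_unfold[OF B G(1) less.prems] forward_unfold[OF B H v(1)] v inputs less.prems
      by simp
    then show ?thesis
      by simp
  next
    case False
    define \<psi> where "\<psi> = inv_into (in_nbrs EG v) \<phi>"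
    have "\<forall>u' \<in> in_nbrs EH (\<phi> v).
        wG (\<psi> u', v) \<in> W (\<pi>H u', \<pi>H (\<phi> v)) \<and> norm (wG (\<psi> u', v) - wH (u', \<phi> v)) \<le> \<eta> \<and>
        ?fG (\<psi> u') \<in> Y (\<pi>H u') \<and>
        ennreal (norm (?fG (\<psi> u') - ?fH u')) \<le> Lvals IB EB Y W VH EH \<pi>H cH M \<sigma> wH \<eta> x u'"
      (is "\<forall>u' \<in> _. ?admissible u'")
    proof
      fix u'
      assume "u' \<in> in_nbrs EH (\<phi> v)"
      moreover have bij: "bij_betw \<phi> (in_nbrs EG v) (in_nbrs EH (\<phi> v))"
        using fib less.prems by (simp add: fibration_def)
      ultimately obtain u where u: "u \<in> in_nbrs EG v" "u' = \<phi> u"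
        by (auto simp: bij_betw_def)
      moreover have "\<psi> u' = u"
        unfolding \<psi>_def u(2) using bij u(1) by (rule bij_betw_inv_into_left)
      moreover have "(u, v) \<in> EG" "u \<in> VG"
        using G(1) u(1) by (auto simp: in_nbrs_def lifted_perceptron_def is_graph_def)
      ultimately show "?admissible u'"
        using G(2) close lab v less.IH forward_in_Y[OF B G x] by (auto simp: is_param_def)
    qed
    then show ?thesis
      using Lvals_upper[OF B H v(1)] forward_unfold[OF B H v(1)] v False
        forward_fibration_unfold[OF B G(1) fib lab less.prems False]
      by (simp add: \<psi>_def case_prod_beta)
  qed
qed

theorem proposition4:
  fixes VB :: "'b set" and EB :: "('b \<times> 'b) set" and IB TB :: "'b set"
    and Y :: "'b \<Rightarrow> 'y::euclidean_space set"
    and Z :: "'b \<times> 'b \<Rightarrow> 'z::euclidean_space set"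
    and W :: "'b \<times> 'b \<Rightarrow> 'w::euclidean_space set"
    and M :: "'b \<times> 'b \<Rightarrow> 'w \<Rightarrow> 'y \<Rightarrow> 'z" and \<sigma> :: "'b \<Rightarrow> ('b \<Rightarrow> 'z) \<Rightarrow> 'y"
    and C :: "'c set" and pC :: "'c \<Rightarrow> 'b"
    and VG :: "'g set" and EG :: "('g \<times> 'g) set" and \<pi>G :: "'g \<Rightarrow> 'b" and cG :: "'g \<Rightarrow> 'c"
    and VH :: "'h set" and EH :: "('h \<times> 'h) set" and \<pi>H :: "'h \<Rightarrow> 'b" and cH :: "'h \<Rightarrow> 'c"
    and wG :: "'g \<times> 'g \<Rightarrow> 'w" and wH :: "'h \<times> 'h \<Rightarrow> 'w"
    and X :: "('c \<Rightarrow> 'y) set" and \<eta> :: real and \<phi> :: "'g \<Rightarrow> 'h"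
  assumes B: "perceptron_module VB EB IB TB Y Z W M \<sigma>"
    and C: "finite C" "pC ` C \<subseteq> IB"
    and G: "lifted_perceptron VB EB IB C pC VG EG \<pi>G cG" "is_param W EG \<pi>G wG"
    and H: "lifted_perceptron VB EB IB C pC VH EH \<pi>H cH" "is_param W EH \<pi>H wH"
    and X: "X \<subseteq> Pi C (\<lambda>u. Y (pC u))"
    and eta: "\<eta> \<ge> 0"
    and phi: "fibration VG EG VH EH \<phi>"
      "\<forall>v \<in> VG. \<pi>G v = \<pi>H (\<phi> v)"
      "\<forall>v \<in> VG. \<pi>G v \<in> IB \<longrightarrow> cG v = cH (\<phi> v)"
    and close: "\<forall>(u, v) \<in> EG. norm (wG (u, v) - wH (\<phi> u, \<phi> v)) \<le> \<eta>"
  shows "\<forall>v \<in> VG.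
    (SUP x \<in> X. ennreal (norm (forward IB EB VG EG \<pi>G cG M \<sigma> wG x v
                               - forward IB EB VH EH \<pi>H cH M \<sigma> wH x (\<phi> v))))
      \<le> Lconst IB EB Y W VH EH \<pi>H cH M \<sigma> wH \<eta> X"
proof
  fix v
  assume v: "v \<in> VG"
  then have "\<phi> v \<in> VH"
    using phi(1) by (auto simp: fibration_def graph_hom_def)
  then show "(SUP x \<in> X. ennreal (norm (forward IB EB VG EG \<pi>G cG M \<sigma> wG x v
                               - forward IB EB VH EH \<pi>H cH M \<sigma> wH x (\<phi> v))))
      \<le> Lconst IB EB Y W VH EH \<pi>H cH M \<sigma> wH \<eta> X"
    unfolding Lconst_def
    using forward_fibration_dist_le_Lvals[OF B G H(1) _ phi close v] X
    by (intro SUP_subset_mono[OF order_refl]) (blast intro: SUP_upper2)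
qed

end
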